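(* Let $\mathcal F=\{F_x : x\in V(G)\}$ be a representation of a connected triangle-free restricted frame graph $G$ with no full star-cutset. Then the big vertices of $\mathcal F$ form a clique of $G$; in particular, there are at most two big vertices.
   Context: $N[v]=\{v\}\cup N(v)$. A full star-cutset of a connected graph $G$ is a set $N[u]$ whose removal disconnects $G$. A frame is the boundary of an axis-parallel box in $\mathbb R^2$. A representation of $G$ as a restricted frame graph is a family of frames $\{F_x\}$ with $xy\in E(G)$ iff $F_x\cap F_y\neq\emptyset$, satisfying: (1) corners of a frame do not coincide with any point of another frame; (2) the left side of any frame meets no other frame; (3) if the right side of a frame meets a second frame, it meets both the top and the bottom side of that frame; (4) if two frames intersect, no frame is entirely contained in the intersection of the regions bounded by them. A frame $F_1$ contains $F_2$ if they are disjoint and $F_2$ lies in the region bounded by $F_1$. For an induced cycle $C$ of $G$, a vertex $v\in V(C)$ is a big vertex of $C$ (with respect to $\mathcal F$) if $F_v$ contains the frame of every vertex of $V(C)\setminus N[v]$; the big vertices of $\mathcal F$ are the vertices that are big vertices of some induced cycle of $G$. *)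

theory Defs
  imports Main "HOL-Analysis.Analysis"
begin

definition simple_graph :: "'v set \<Rightarrow> ('v \<Rightarrow> 'v \<Rightarrow> bool) \<Rightarrow> bool" where
  "simple_graph V E \<longleftrightarrow> finite V \<and> (\<forall>u v. E u v \<longrightarrow> u \<in> V \<and> v \<in> V \<and> u \<noteq> v \<and> E v u)"

definition connected_in :: "'v set \<Rightarrow> ('v \<Rightarrow> 'v \<Rightarrow> bool) \<Rightarrow> 'v \<Rightarrow> 'v \<Rightarrow> bool" where
  "connected_in S E u v \<longleftrightarrow> (\<lambda>a b. E a b \<and> a \<in> S \<and> b \<in> S)\<^sup>*\<^sup>* u v"

definition graph_connected :: "'v set \<Rightarrow> ('v \<Rightarrow> 'v \<Rightarrow> bool) \<Rightarrow> bool" where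
  "graph_connected V E \<longleftrightarrow> V \<noteq> {} \<and> (\<forall>u\<in>V. \<forall>v\<in>V. connected_in V E u v)"

definition triangle_free :: "'v set \<Rightarrow> ('v \<Rightarrow> 'v \<Rightarrow> bool) \<Rightarrow> bool" where
  "triangle_free V E \<longleftrightarrow> \<not> (\<exists>x\<in>V. \<exists>y\<in>V. \<exists>z\<in>V. E x y \<and> E y z \<and> E x z)"

definition closed_nbhd :: "'v set \<Rightarrow> ('v \<Rightarrow> 'v \<Rightarrow> bool) \<Rightarrow> 'v \<Rightarrow> 'v set" where
  "closed_nbhd V E u = insert u {v \<in> V. E u v}"

definition full_star_cutset :: "'v set \<Rightarrow> ('v \<Rightarrow> 'v \<Rightarrow> bool) \<Rightarrow> 'v \<Rightarrow> bool" where
  "full_star_cutset V E u \<longleftrightarrow> u \<in> V \<and>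
     (\<exists>a \<in> V - closed_nbhd V E u. \<exists>b \<in> V - closed_nbhd V E u.
        \<not> connected_in (V - closed_nbhd V E u) E a b)"

definition clique :: "'v set \<Rightarrow> ('v \<Rightarrow> 'v \<Rightarrow> bool) \<Rightarrow> 'v set \<Rightarrow> bool" where
  "clique V E K \<longleftrightarrow> K \<subseteq> V \<and> (\<forall>u\<in>K. \<forall>v\<in>K. u \<noteq> v \<longrightarrow> E u v)"

definition induced_cycle :: "'v set \<Rightarrow> ('v \<Rightarrow> 'v \<Rightarrow> bool) \<Rightarrow> 'v list \<Rightarrow> bool" where
  "induced_cycle V E cs \<longleftrightarrow> distinct cs \<and> length cs \<ge> 3 \<and> set cs \<subseteq> V \<and>
     (\<forall>i < length cs. \<forall>j < length cs. i \<noteq> j \<longrightarrow>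
        (E (cs ! i) (cs ! j) \<longleftrightarrow> j = Suc i mod length cs \<or> i = Suc j mod length cs))"

text \<open>A frame is the boundary of the axis-parallel box [fx1,fx2] x [fy1,fy2]
  with fx1 < fx2 and fy1 < fy2.\<close>
record frame =
  fx1 :: real
  fx2 :: real
  fy1 :: real
  fy2 :: real

definition valid_frame :: "frame \<Rightarrow> bool" where
  "valid_frame F \<longleftrightarrow> fx1 F < fx2 F \<and> fy1 F < fy2 F"

definition left_side :: "frame \<Rightarrow> (real \<times> real) set" where
  "left_side F = {(fx1 F, y) | y. fy1 F \<le> y \<and> y \<le> fy2 F}"

definition right_side :: "frame \<Rightarrow> (real \<times> real) set" where
  "right_side F = {(fx2 F, y) | y. fy1 F \<le> y \<and> y \<le> fy2 F}"

definition bottom_side :: "frame \<Rightarrow> (real \<times> real) set" where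
  "bottom_side F = {(x, fy1 F) | x. fx1 F \<le> x \<and> x \<le> fx2 F}"

definition top_side :: "frame \<Rightarrow> (real \<times> real) set" where
  "top_side F = {(x, fy2 F) | x. fx1 F \<le> x \<and> x \<le> fx2 F}"

definition frame_pts :: "frame \<Rightarrow> (real \<times> real) set" where
  "frame_pts F = left_side F \<union> right_side F \<union> bottom_side F \<union> top_side F"

definition corners :: "frame \<Rightarrow> (real \<times> real) set" where
  "corners F = {(fx1 F, fy1 F), (fx1 F, fy2 F), (fx2 F, fy1 F), (fx2 F, fy2 F)}"

definition region :: "frame \<Rightarrow> (real \<times> real) set" where
  "region F = {(x, y). fx1 F \<le> x \<and> x \<le> fx2 F \<and> fy1 F \<le> y \<and> y \<le> fy2 F}"

definition frame_contains :: "frame \<Rightarrow> frame \<Rightarrow> bool" where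
  "frame_contains F1 F2 \<longleftrightarrow> frame_pts F1 \<inter> frame_pts F2 = {} \<and> frame_pts F2 \<subseteq> region F1"

definition restricted_frame_rep ::
    "'v set \<Rightarrow> ('v \<Rightarrow> 'v \<Rightarrow> bool) \<Rightarrow> ('v \<Rightarrow> frame) \<Rightarrow> bool" where
  "restricted_frame_rep V E F \<longleftrightarrow>
     (\<forall>x\<in>V. valid_frame (F x)) \<and>
     (\<forall>x\<in>V. \<forall>y\<in>V. x \<noteq> y \<longrightarrow> (E x y \<longleftrightarrow> frame_pts (F x) \<inter> frame_pts (F y) \<noteq> {})) \<and>
     \<comment> \<open>(1) corners of a frame do not coincide with any point of another frame\<close>
     (\<forall>x\<in>V. \<forall>y\<in>V. x \<noteq> y \<longrightarrow> corners (F x) \<inter> frame_pts (F y) = {}) \<and>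
     \<comment> \<open>(2) the left side of any frame meets no other frame\<close>
     (\<forall>x\<in>V. \<forall>y\<in>V. x \<noteq> y \<longrightarrow> left_side (F x) \<inter> frame_pts (F y) = {}) \<and>
     \<comment> \<open>(3) if the right side meets another frame, it meets its top and bottom side\<close>
     (\<forall>x\<in>V. \<forall>y\<in>V. x \<noteq> y \<longrightarrow> right_side (F x) \<inter> frame_pts (F y) \<noteq> {} \<longrightarrow>
        right_side (F x) \<inter> top_side (F y) \<noteq> {} \<and> right_side (F x) \<inter> bottom_side (F y) \<noteq> {}) \<and>
     \<comment> \<open>(4) if two frames intersect, no frame lies within the intersection of their regions\<close>
     (\<forall>x\<in>V. \<forall>y\<in>V. x \<noteq> y \<longrightarrow> frame_pts (F x) \<inter> frame_pts (F y) \<noteq> {} \<longrightarrow>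
        (\<forall>z\<in>V. \<not> frame_pts (F z) \<subseteq> region (F x) \<inter> region (F y)))"

definition big_vertex_of :: "'v set \<Rightarrow> ('v \<Rightarrow> 'v \<Rightarrow> bool) \<Rightarrow> ('v \<Rightarrow> frame) \<Rightarrow> 'v list \<Rightarrow> 'v \<Rightarrow> bool" where
  "big_vertex_of V E F cs v \<longleftrightarrow> v \<in> set cs \<and>
     (\<forall>w \<in> set cs - closed_nbhd V E v. frame_contains (F v) (F w))"

definition big_vertices :: "'v set \<Rightarrow> ('v \<Rightarrow> 'v \<Rightarrow> bool) \<Rightarrow> ('v \<Rightarrow> frame) \<Rightarrow> 'v set" where
  "big_vertices V E F = {v. \<exists>cs. induced_cycle V E cs \<and> big_vertex_of V E F cs v}"

end

theory Submission
  imports Defs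
begin

text \<open>Let v be big for the induced cycle C. By triangle-freeness C has a vertex w outside N[v],
  and F_w lies strictly inside F_v. Since N[v] is not a cutset, every vertex outside N[v] is
  joined to w by a path avoiding N[v]; along such a path consecutive frames meet, no frame meets
  F_v, and frames are connected, so every frame of a vertex outside N[v] lies strictly inside
  F_v. Two non-adjacent big vertices would then have frames strictly inside each other, which the
  left x-coordinates forbid. A clique of a triangle-free graph has at most two vertices.\<close>

definition open_region :: "frame \<Rightarrow> (real \<times> real) set" where
  "open_region F = {fx1 F<..<fx2 F} \<times> {fy1 F<..<fy2 F}"

lemma region_eq_Times: "region F = {fx1 F..fx2 F} \<times> {fy1 F..fy2 F}"
  unfolding region_def by auto

lemma open_open_region: "open (open_region F)"
  unfolding open_region_def by (intro open_Times) auto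

lemma closed_region: "closed (region F)"
  unfolding region_eq_Times by (intro closed_Times) auto

lemma open_region_subset_region: "open_region F \<subseteq> region F"
  unfolding open_region_def region_eq_Times by auto

lemma frame_pts_eq_region_diff: "valid_frame F \<Longrightarrow> frame_pts F = region F - open_region F"
  unfolding frame_pts_def region_def open_region_def left_side_def right_side_def
    top_side_def bottom_side_def valid_frame_def
  by auto

lemma frame_contains_imp_subset_open_region:
  "valid_frame F \<Longrightarrow> frame_contains F G \<Longrightarrow> frame_pts G \<subseteq> open_region F"
  unfolding frame_contains_def frame_pts_eq_region_diff by blast

lemma sides_eq_image:
  "left_side F = (\<lambda>y. (fx1 F, y)) ` {fy1 F..fy2 F}"
  "right_side F = (\<lambda>y. (fx2 F, y)) ` {fy1 F..fy2 F}"
  "bottom_side F = (\<lambda>x. (x, fy1 F)) ` {fx1 F..fx2 F}"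
  "top_side F = (\<lambda>x. (x, fy2 F)) ` {fx1 F..fx2 F}"
  unfolding left_side_def right_side_def top_side_def bottom_side_def by auto

lemma connected_sides:
  "connected (left_side F)" "connected (right_side F)"
  "connected (bottom_side F)" "connected (top_side F)"
  unfolding sides_eq_image
  by (intro connected_continuous_image continuous_intros; simp)+

lemma connected_frame_pts:
  assumes "valid_frame F"
  shows "connected (frame_pts F)"
proof -
  have "(fx1 F, fy1 F) \<in> left_side F \<inter> bottom_side F"
    and "(fx2 F, fy1 F) \<in> bottom_side F \<inter> right_side F"
    and "(fx1 F, fy2 F) \<in> left_side F \<inter> top_side F"
    using assms unfolding valid_frame_def sides_eq_image by auto
  then have "connected (((left_side F \<union> bottom_side F) \<union> right_side F) \<union> top_side F)"
    by (intro connected_Un connected_sides) blast+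
  moreover have "((left_side F \<union> bottom_side F) \<union> right_side F) \<union> top_side F = frame_pts F"
    unfolding frame_pts_def by auto
  ultimately show ?thesis by simp
qed

text \<open>A frame disjoint from another one cannot cross it: being connected, it lies entirely inside or
  outside.\<close>
lemma frame_pts_subset_open_region:
  assumes "valid_frame A" "valid_frame B" "frame_pts A \<inter> frame_pts B = {}"
    and "frame_pts A \<inter> open_region B \<noteq> {}"
  shows "frame_pts A \<subseteq> open_region B"
proof -
  have cover: "frame_pts A \<subseteq> open_region B \<union> - region B"
    using assms(3) unfolding frame_pts_eq_region_diff[OF assms(2)] by blast
  have "open_region B \<inter> - region B \<inter> frame_pts A = {}"
    using open_region_subset_region by blast
  then have "open_region B \<inter> frame_pts A = {} \<or> - region B \<inter> frame_pts A = {}"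
    using connectedD[OF connected_frame_pts[OF assms(1)] open_open_region] cover closed_region
    by (metis open_Compl)
  then show ?thesis using assms(4) cover by blast
qed

lemma restricted_frame_rep_valid:
  assumes "restricted_frame_rep V E F" "x \<in> V"
  shows "valid_frame (F x)"
  using assms(1)[unfolded restricted_frame_rep_def, THEN conjunct1] assms(2) by blast

lemma restricted_frame_rep_adjacent_iff:
  assumes "restricted_frame_rep V E F" "x \<in> V" "y \<in> V" "x \<noteq> y"
  shows "E x y \<longleftrightarrow> frame_pts (F x) \<inter> frame_pts (F y) \<noteq> {}"
  using assms(1)[unfolded restricted_frame_rep_def, THEN conjunct2, THEN conjunct1] assms(2-4)
  by blast

lemma frame_pts_subset_open_region_if_connected_outside_star:
  assumes rep: "restricted_frame_rep V E F" and v: "v \<in> V"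
    and conn: "connected_in (V - closed_nbhd V E v) E w a"
    and w_inside: "frame_pts (F w) \<subseteq> open_region (F v)"
  shows "frame_pts (F a) \<subseteq> open_region (F v)"
  using conn[unfolded connected_in_def]
proof (induction rule: rtranclp_induct)
  case base
  show ?case using w_inside .
next
  case (step b c)
  show ?case
  proof (cases "b = c")
    case True
    with step.IH show ?thesis by simp
  next
    case False
    have "b \<in> V" "c \<in> V" "c \<noteq> v" "\<not> E v c" "E b c"
      using step.hyps(2) unfolding closed_nbhd_def by auto
    then have "frame_pts (F c) \<inter> frame_pts (F b) \<noteq> {}"
      and disjoint: "frame_pts (F c) \<inter> frame_pts (F v) = {}"
      using restricted_frame_rep_adjacent_iff[OF rep] False v by blast+
    with step.IH have "frame_pts (F c) \<inter> open_region (F v) \<noteq> {}"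
      by blast
    with disjoint show ?thesis
      by (intro frame_pts_subset_open_region restricted_frame_rep_valid[OF rep] \<open>c \<in> V\<close> v)
  qed
qed

lemma induced_cycle_subset: "induced_cycle V E cs \<Longrightarrow> set cs \<subseteq> V"
  unfolding induced_cycle_def by blast

text \<open>The vertex two steps further along the cycle works.\<close>
lemma induced_cycle_non_neighbour:
  assumes tf: "triangle_free V E" and cyc: "induced_cycle V E cs" and u: "u \<in> set cs"
  shows "\<exists>w \<in> set cs. w \<notin> closed_nbhd V E u"
proof -
  let ?n = "length cs"
  obtain i where i: "i < ?n" "cs ! i = u" using u by (meson in_set_conv_nth)
  have n: "?n \<ge> 3" and dist: "distinct cs"
    using cyc unfolding induced_cycle_def by auto
  have adj: "\<And>k l. k < ?n \<Longrightarrow> l < ?n \<Longrightarrow> k \<noteq> l \<Longrightarrow>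
      E (cs ! k) (cs ! l) \<longleftrightarrow> l = Suc k mod ?n \<or> k = Suc l mod ?n"
    using cyc unfolding induced_cycle_def by blast
  define j where "j = Suc i mod ?n"
  define k where "k = Suc j mod ?n"
  have "0 < ?n" using n by linarith
  then have "j < ?n" "k < ?n" unfolding j_def k_def by simp_all
  moreover have "i \<noteq> j" "j \<noteq> k" "i \<noteq> k"
    using n i(1) unfolding k_def j_def by (auto simp: mod_Suc)
  ultimately have "E (cs ! i) (cs ! j)" "E (cs ! j) (cs ! k)" "cs ! k \<noteq> u"
    using adj j_def k_def dist i nth_eq_iff_index_eq by metis+
  moreover have "cs ! i \<in> V" "cs ! j \<in> V" "cs ! k \<in> V"
    using induced_cycle_subset[OF cyc] i(1) \<open>j < ?n\<close> \<open>k < ?n\<close> by auto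
  ultimately have "cs ! k \<notin> closed_nbhd V E u"
    using tf i(2) unfolding triangle_free_def closed_nbhd_def by blast
  with \<open>k < ?n\<close> show ?thesis by auto
qed

lemma big_vertices_subset: "big_vertices V E F \<subseteq> V"
  unfolding big_vertices_def big_vertex_of_def using induced_cycle_subset by blast

lemma big_vertex_non_neighbour_inside:
  assumes tf: "triangle_free V E" and rep: "restricted_frame_rep V E F"
    and no_cut: "\<not> full_star_cutset V E v"
    and v: "v \<in> big_vertices V E F" and a: "a \<in> V - closed_nbhd V E v"
  shows "frame_pts (F a) \<subseteq> open_region (F v)"
proof -
  obtain cs where cyc: "induced_cycle V E cs" and big: "big_vertex_of V E F cs v"
    using v unfolding big_vertices_def by blast
  have "v \<in> set cs" using big unfolding big_vertex_of_def by blast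
  then obtain w where "w \<in> set cs" "w \<notin> closed_nbhd V E v"
    using induced_cycle_non_neighbour[OF tf cyc] by blast
  then have w: "w \<in> V - closed_nbhd V E v" "frame_contains (F v) (F w)"
    using big induced_cycle_subset[OF cyc] unfolding big_vertex_of_def by auto
  have vV: "v \<in> V" using subsetD[OF big_vertices_subset v] .
  have "\<forall>x \<in> V - closed_nbhd V E v. \<forall>y \<in> V - closed_nbhd V E v.
      connected_in (V - closed_nbhd V E v) E x y"
    using no_cut vV unfolding full_star_cutset_def by simp
  with w(1) a have "connected_in (V - closed_nbhd V E v) E w a" by blast
  then show ?thesis
    using frame_pts_subset_open_region_if_connected_outside_star[OF rep vV]
      frame_contains_imp_subset_open_region[OF restricted_frame_rep_valid[OF rep vV] w(2)]
    by blast
qed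

lemma fx1_less_if_frame_pts_subset_open_region:
  "valid_frame A \<Longrightarrow> frame_pts A \<subseteq> open_region B \<Longrightarrow> fx1 B < fx1 A"
proof -
  assume "valid_frame A" "frame_pts A \<subseteq> open_region B"
  moreover have "(fx1 A, fy1 A) \<in> frame_pts A"
    using \<open>valid_frame A\<close> unfolding valid_frame_def frame_pts_def left_side_def by auto
  ultimately show ?thesis unfolding open_region_def by auto
qed

lemma big_vertices_adjacent:
  assumes sg: "simple_graph V E" and tf: "triangle_free V E"
    and rep: "restricted_frame_rep V E F"
    and no_cut: "\<forall>u\<in>V. \<not> full_star_cutset V E u"
    and u: "u \<in> big_vertices V E F" and v: "v \<in> big_vertices V E F" and "u \<noteq> v"
  shows "E u v"
proof (rule ccontr)
  assume "\<not> E u v"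
  moreover have "\<not> E v u" using sg \<open>\<not> E u v\<close> unfolding simple_graph_def by blast
  moreover have uV: "u \<in> V" and vV: "v \<in> V"
    using subsetD[OF big_vertices_subset u] subsetD[OF big_vertices_subset v] .
  ultimately have "u \<in> V - closed_nbhd V E v" "v \<in> V - closed_nbhd V E u"
    using \<open>u \<noteq> v\<close> unfolding closed_nbhd_def by auto
  then have "frame_pts (F u) \<subseteq> open_region (F v)" "frame_pts (F v) \<subseteq> open_region (F u)"
    using big_vertex_non_neighbour_inside[OF tf rep] no_cut u v uV vV by blast+
  then have "fx1 (F v) < fx1 (F u)" "fx1 (F u) < fx1 (F v)"
    using fx1_less_if_frame_pts_subset_open_region restricted_frame_rep_valid[OF rep] uV vV
    by blast+
  then show False by simp
qed

lemma triangle_free_clique_card_le_2: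
  assumes tf: "triangle_free V E" and K: "clique V E K"
  shows "card K \<le> 2"
proof (rule ccontr)
  assume "\<not> card K \<le> 2"
  then obtain S where "S \<subseteq> K" "card S = 3"
    using obtain_subset_with_card_n[of 3 K] by force
  then obtain x y z where "x \<in> K" "y \<in> K" "z \<in> K" "x \<noteq> y" "y \<noteq> z" "x \<noteq> z"
    unfolding card_3_iff by blast
  with K have "x \<in> V" "y \<in> V" "z \<in> V" "E x y" "E y z" "E x z"
    unfolding clique_def by blast+
  with tf show False unfolding triangle_free_def by blast
qed

theorem lemma3p9:
  fixes V :: "'v set" and E :: "'v \<Rightarrow> 'v \<Rightarrow> bool" and F :: "'v \<Rightarrow> frame"
  assumes "simple_graph V E"
    and "graph_connected V E"
    and "triangle_free V E"
    and "restricted_frame_rep V E F"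
    and "\<forall>u\<in>V. \<not> full_star_cutset V E u"
  shows "clique V E (big_vertices V E F) \<and> card (big_vertices V E F) \<le> 2"
proof -
  have "clique V E (big_vertices V E F)"
    unfolding clique_def
    using big_vertices_subset[of V E F] big_vertices_adjacent[OF assms(1,3,4,5)] by blast
  with triangle_free_clique_card_le_2[OF assms(3)] show ?thesis by blast
qed

end
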